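(* Let $k>0$ be a constant, $p=k/n$, and $G\sim\mathcal{G}(n,p)$ with $m$ its number of edges. For $1\le u\le n$ define $$w_n(u)=\sum_{i=n-u}^{n}\binom{i}{i-(n-u)}(1-p)^{\binom{i-(n-u)}{2}}\,\mathbb{P}\left(m\ge\frac{n^2}{2u}-\frac{n}{2}\right).$$ Let $\lambda>1$ be the solution of $$2\ln 2-(k+1)+\lambda+(\lambda-1)\ln\frac{k}{\lambda-1}=0,$$ or equivalently $\lambda=1+k\left(1+\phi^{-1}\left(\frac{2}{k}\ln 2\right)\right)$ where $\phi(z)=(1+z)\ln(1+z)-z$. Then for any $u\le n/\lambda$, $w_n(u)$ is bounded by a polynomial in $n$.
   Context: $\mathcal{G}(n,p)$ is the binomial random graph on $n$ vertices in which each of the $\binom{n}{2}$ pairs of vertices is an edge with probability $p$, independently. $w_n(u)$ is the paper's bound on the expected number of nodes with potential $u$ in the best-first branch-and-bound search tree for maximum independent set (potential of a partial solution $S\subseteq\{v_1,\dots,v_i\}$ being $|S|+n-i$). *)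

theory Defs
  imports "HOL-Probability.Probability"
begin

definition vertex_pairs :: "nat \<Rightarrow> (nat \<times> nat) set" where
  "vertex_pairs n = {(i, j). i < j \<and> j < n}"

definition gnp :: "nat \<Rightarrow> real \<Rightarrow> (nat \<times> nat) set pmf" where
  "gnp n p = map_pmf (\<lambda>f. {e \<in> vertex_pairs n. f e})
                     (Pi_pmf (vertex_pairs n) False (\<lambda>_. bernoulli_pmf p))"

definition w :: "real \<Rightarrow> nat \<Rightarrow> nat \<Rightarrow> real" where
  "w k n u = (let p = k / real n in
     (\<Sum>i = n - u..n. real (i choose (i - (n - u))) * (1 - p) ^ ((i - (n - u)) choose 2)
        * measure_pmf.prob (gnp n p)
            {E. real (card E) \<ge> real n ^ 2 / (2 * real u) - real n / 2}))"

end

theory Submission imports Defs begin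

text \<open>With \<open>a = (\<lambda> - 1)/k\<close>, Markov's inequality for \<open>a\<^sup>m\<close> gives
  \<open>P(m \<ge> t) \<le> exp (p (a - 1) n (n - 1)/2 - t ln a)\<close>. For \<open>u \<le> n/\<lambda>\<close> the threshold is at least
  \<open>(\<lambda> - 1) n/2\<close>, and the defining equation of \<open>\<lambda>\<close> makes the exponent at most \<open>-n ln 2\<close>.
  This \<open>2\<^sup>-\<^sup>n\<close> absorbs the at most \<open>2\<^sup>n\<close> binomial coefficients, so each of the \<open>u + 1\<close>
  summands of \<open>w\<^sub>n(u)\<close> is at most 1 and \<open>w\<^sub>n(u) \<le> 2n\<close>.\<close>

lemma finite_vertex_pairs: "finite (vertex_pairs n)"
  by (rule finite_subset[of _ "{..<n} \<times> {..<n}"]) (auto simp: vertex_pairs_def)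

lemma card_vertex_pairs: "2 * card (vertex_pairs n) = n * (n - 1)"
proof (induction n)
  case 0
  then show ?case by (simp add: vertex_pairs_def)
next
  case (Suc n)
  have split: "vertex_pairs (Suc n) = vertex_pairs n \<union> (\<lambda>i. (i, n)) ` {..<n}"
    by (auto simp: vertex_pairs_def less_Suc_eq)
  have disjoint: "vertex_pairs n \<inter> (\<lambda>i. (i, n)) ` {..<n} = {}"
    by (auto simp: vertex_pairs_def)
  have "card (vertex_pairs (Suc n)) = card (vertex_pairs n) + n"
    unfolding split using finite_vertex_pairs disjoint
    by (subst card_Un_disjoint) (auto simp: card_image inj_on_def)
  then show ?case using Suc by (cases n) (auto simp: algebra_simps)
qed

lemma prob_card_Pi_bernoulli_ge:
  fixes V :: "'a set" and p a t :: real
  assumes V: "finite V" and p: "0 \<le> p" "p \<le> 1" and a: "a \<ge> 1"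
  shows "measure_pmf.prob (Pi_pmf V False (\<lambda>_. bernoulli_pmf p)) {f. real (card {e\<in>V. f e}) \<ge> t}
          \<le> (1 - p + p * a) ^ card V / a powr t"
proof -
  let ?M = "Pi_pmf V False (\<lambda>_. bernoulli_pmf p)"
  define u where "u f = (\<Prod>e\<in>V. (if f e then a else 1))" for f :: "'a \<Rightarrow> bool"
  have u_eq: "u f = a ^ card {e\<in>V. f e}" for f
  proof -
    have "u f = (\<Prod>e\<in>V \<inter> {e. f e}. a) * (\<Prod>e\<in>V \<inter> - {e. f e}. 1)"
      unfolding u_def by (rule prod.If_cases[OF V])
    also have "\<dots> = a ^ card {e\<in>V. f e}" by (simp add: Int_def conj_commute)
    finally show ?thesis .
  qed
  have event_sub: "{f. real (card {e\<in>V. f e}) \<ge> t} \<subseteq> {f \<in> space (measure_pmf ?M). u f \<ge> a powr t}"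
  proof safe
    fix f assume "t \<le> real (card {e\<in>V. f e})"
    then have "a powr t \<le> a powr real (card {e\<in>V. f e})" using a by (intro powr_mono) auto
    also have "\<dots> = u f" using a by (simp add: u_eq powr_realpow)
    finally show "a powr t \<le> u f" .
  qed simp
  have integrable_factor: "integrable (measure_pmf (bernoulli_pmf p)) (\<lambda>v. if v then a else 1)"
    by (rule integrable_measure_pmf_finite) auto
  have integrable_u: "integrable (measure_pmf ?M) u"
    unfolding u_def by (rule integrable_prod_Pi_pmf[OF V]) (use integrable_factor in auto)
  have expectation_u: "measure_pmf.expectation ?M u = (1 - p + p * a) ^ card V"
  proof -
    have "measure_pmf.expectation ?M u
          = (\<Prod>e\<in>V. measure_pmf.expectation (bernoulli_pmf p) (\<lambda>v. if v then a else 1))"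
      unfolding u_def
      by (rule expectation_prod_Pi_pmf[OF V]) (use integrable_factor a in auto)
    also have "\<dots> = (1 - p + p * a) ^ card V" using p by (simp add: algebra_simps)
    finally show ?thesis .
  qed
  have "measure_pmf.prob ?M {f. real (card {e\<in>V. f e}) \<ge> t}
        \<le> measure_pmf.prob ?M {f \<in> space (measure_pmf ?M). u f \<ge> a powr t}"
    by (rule measure_pmf.finite_measure_mono[OF event_sub]) simp
  also have "\<dots> \<le> measure_pmf.expectation ?M u / a powr t"
    by (rule integral_Markov_inequality_measure[OF integrable_u, of UNIV])
       (use a in \<open>auto simp: u_def intro!: prod_nonneg\<close>)
  finally show ?thesis using expectation_u by simp
qed

lemma prob_gnp_card_ge:
  assumes p: "0 \<le> p" "p \<le> 1" and a: "a \<ge> 1"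
  shows "measure_pmf.prob (gnp n p) {E. real (card E) \<ge> t}
          \<le> exp (p * (a - 1) * (real n * (real n - 1) / 2) - t * ln a)"
proof -
  let ?V = "vertex_pairs n"
  have card_V: "real (card ?V) = real n * (real n - 1) / 2"
    using arg_cong[OF card_vertex_pairs[of n], of real] by (cases n) (auto simp: algebra_simps)
  have base_nonneg: "0 \<le> 1 - p + p * a" using p a mult_nonneg_nonneg[of p a] by linarith
  have base_le_exp: "1 - p + p * a \<le> exp (p * (a - 1))"
    using exp_ge_add_one_self[of "p * (a - 1)"] by (simp add: algebra_simps)
  have "measure_pmf.prob (gnp n p) {E. real (card E) \<ge> t}
        = measure_pmf.prob (Pi_pmf ?V False (\<lambda>_. bernoulli_pmf p)) {f. real (card {e\<in>?V. f e}) \<ge> t}"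
    unfolding gnp_def by (simp add: vimage_def)
  also have "\<dots> \<le> (1 - p + p * a) ^ card ?V / a powr t"
    by (rule prob_card_Pi_bernoulli_ge[OF finite_vertex_pairs p a])
  also have "\<dots> \<le> exp (p * (a - 1)) ^ card ?V / a powr t"
    using base_nonneg base_le_exp by (intro divide_right_mono power_mono) auto
  also have "\<dots> = exp (p * (a - 1) * real (card ?V) - t * ln a)"
    using a by (simp add: powr_def exp_diff exp_of_nat_mult[symmetric] mult.commute)
  finally show ?thesis unfolding card_V .
qed

lemma prob_gnp_many_edges_le_inverse_pow2:
  fixes k lam :: real and n u :: nat
  assumes k: "k > 0" and lam: "lam \<ge> 1 + k"
    and lam_eq: "2 * ln 2 - (k + 1) + lam + (lam - 1) * ln (k / (lam - 1)) = 0"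
    and n: "real n > k" and u: "1 \<le> u" "real u * lam \<le> real n"
  shows "measure_pmf.prob (gnp n (k / real n))
           {E. real (card E) \<ge> real n ^ 2 / (2 * real u) - real n / 2} \<le> 1 / 2 ^ n"
proof -
  define p where "p = k / real n"
  define a where "a = (lam - 1) / k"
  define t where "t = real n ^ 2 / (2 * real u) - real n / 2"
  have n_pos: "real n > 0" using n k by linarith
  have p: "0 \<le> p" "p \<le> 1" unfolding p_def using k n by auto
  have a: "a \<ge> 1" unfolding a_def using k lam by (simp add: field_simps)
  have lam_eq_a: "(lam - 1 - k) - (lam - 1) * ln a = - 2 * ln 2"
    using lam_eq k lam by (simp add: a_def ln_div algebra_simps)
  have threshold: "(lam - 1) * real n / 2 \<le> t"
  proof -
    have "lam * real n \<le> real n * real n / real u" using u n_pos by (simp add: field_simps)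
    then show ?thesis unfolding t_def using u by (simp add: field_simps power2_eq_square)
  qed
  have mean_term: "p * (a - 1) * (real n * (real n - 1) / 2) \<le> (lam - 1 - k) * real n / 2"
  proof -
    have pa: "p * (a - 1) = (lam - 1 - k) / real n"
      unfolding p_def a_def using k n_pos by (simp add: field_simps)
    have "p * (a - 1) * (real n * (real n - 1) / 2) = (lam - 1 - k) * (real n - 1) / 2"
      unfolding pa using n_pos by (simp add: field_simps)
    also have "\<dots> \<le> (lam - 1 - k) * real n / 2" using lam by (simp add: field_simps)
    finally show ?thesis .
  qed
  have "(lam - 1) * real n / 2 * ln a \<le> t * ln a"
    using threshold a by (intro mult_right_mono) auto
  moreover have "real n / 2 * ((lam - 1 - k) - (lam - 1) * ln a)
                 = (lam - 1 - k) * real n / 2 - (lam - 1) * real n / 2 * ln a"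
    by (simp add: field_simps)
  ultimately have "p * (a - 1) * (real n * (real n - 1) / 2) - t * ln a
                   \<le> real n / 2 * ((lam - 1 - k) - (lam - 1) * ln a)"
    using mean_term by linarith
  also have "\<dots> = - real n * ln 2" using lam_eq_a by simp
  finally have exponent: "p * (a - 1) * (real n * (real n - 1) / 2) - t * ln a \<le> - real n * ln 2" .
  have "measure_pmf.prob (gnp n p) {E. real (card E) \<ge> t}
        \<le> exp (p * (a - 1) * (real n * (real n - 1) / 2) - t * ln a)"
    by (rule prob_gnp_card_ge[OF p a])
  also have "\<dots> \<le> exp (- real n * ln 2)" using exponent by simp
  also have "\<dots> = 1 / 2 ^ n" by (simp add: exp_minus exp_of_nat_mult divide_inverse)
  finally show ?thesis unfolding p_def t_def .
qed

lemma w_le_pow2_mult_prob: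
  assumes k: "0 \<le> k" "k \<le> real n" and u: "u \<le> n"
  shows "w k n u \<le> (real u + 1) * (2 ^ n * measure_pmf.prob (gnp n (k / real n))
           {E. real (card E) \<ge> real n ^ 2 / (2 * real u) - real n / 2})"
proof -
  define p where "p = k / real n"
  define P where "P = measure_pmf.prob (gnp n p) {E. real (card E) \<ge> real n ^ 2 / (2 * real u) - real n / 2}"
  have p: "0 \<le> p" "p \<le> 1" unfolding p_def using k by (auto simp: divide_le_eq_1)
  have term_le: "real (i choose (i - (n - u))) * (1 - p) ^ ((i - (n - u)) choose 2) * P \<le> 2 ^ n * P"
    if i: "i \<in> {n - u..n}" for i
  proof -
    have "i choose (i - (n - u)) \<le> 2 ^ i" by (rule binomial_le_pow2)
    also have "(2::nat) ^ i \<le> 2 ^ n" using i by (intro power_increasing) auto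
    finally have "i choose (i - (n - u)) \<le> 2 ^ n" .
    then have "real (i choose (i - (n - u))) \<le> 2 ^ n"
      by (metis of_nat_le_iff of_nat_numeral of_nat_power)
    moreover have "(1 - p) ^ ((i - (n - u)) choose 2) \<le> 1" using p by (intro power_le_one) auto
    ultimately have "real (i choose (i - (n - u))) * (1 - p) ^ ((i - (n - u)) choose 2) \<le> 2 ^ n * 1"
      using p by (intro mult_mono) auto
    then show ?thesis by (intro mult_right_mono) (auto simp: P_def)
  qed
  have "w k n u = (\<Sum>i = n - u..n. real (i choose (i - (n - u))) * (1 - p) ^ ((i - (n - u)) choose 2) * P)"
    unfolding w_def P_def p_def Let_def by simp
  also have "\<dots> \<le> real (card {n - u..n}) * (2 ^ n * P)"
    by (rule sum_bounded_above) (rule term_le)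
  also have "real (card {n - u..n}) = real u + 1" using u by simp
  finally show ?thesis unfolding P_def p_def .
qed

theorem proposition4:
  fixes k lam :: real
  assumes "k > 0"
    and "lam > 1"
    and "lam \<ge> 1 + k"
    and "2 * ln 2 - (k + 1) + lam + (lam - 1) * ln (k / (lam - 1)) = 0"
  shows "\<exists>C (d::nat) N. \<forall>n \<ge> N. \<forall>u. 1 \<le> u \<and> real u \<le> real n / lam \<longrightarrow>
           w k n u \<le> C * real n ^ d"
proof -
  have "w k n u \<le> 2 * real n ^ 1"
    if n: "nat \<lceil>k\<rceil> + 1 \<le> n" and u: "1 \<le> u" "real u \<le> real n / lam" for n u
  proof -
    have n_gt_k: "real n > k" using n by linarith
    have u_lam: "real u * lam \<le> real n" using u assms(2) by (simp add: field_simps)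
    moreover have "real u * 1 \<le> real u * lam" using assms(2) by (intro mult_left_mono) auto
    ultimately have u_le_n: "u \<le> n" by simp
    have "w k n u \<le> (real u + 1) * (2 ^ n * measure_pmf.prob (gnp n (k / real n))
           {E. real (card E) \<ge> real n ^ 2 / (2 * real u) - real n / 2})"
      using assms(1) n_gt_k u_le_n by (intro w_le_pow2_mult_prob) auto
    also have "\<dots> \<le> (real u + 1) * (2 ^ n * (1 / 2 ^ n))"
      using prob_gnp_many_edges_le_inverse_pow2[OF assms(1,3,4) n_gt_k u(1) u_lam]
      by (intro mult_left_mono) auto
    also have "\<dots> \<le> 2 * real n ^ 1" using u_le_n u by simp
    finally show ?thesis .
  qed
  then show ?thesis by blast
qed

end
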